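(* Let $(\mathbf{T},d,r,\mu)$ be an IP-tree. Then for every $\varepsilon>0$ there exist $m_1,m_2\in\mathbb{N}$ and measurable sets $A_1,\dots,A_{m_1},B_1,\dots,B_{m_2},S\subseteq\mathbf{T}$ such that (1) $A_1,\dots,A_{m_1},B_1,\dots,B_{m_2},S$ partition $\mathbf{T}$; (2) $\mu(S)\le\varepsilon$, and for all $i\in[m_1]$, $j\in[m_2]$: $\operatorname{diam}(A_i)\le\varepsilon$, $\mu(A_i)\le\varepsilon$ and $\#B_j=1$; (3) the closure of $\bigcup_{i=1}^{m_1}A_i\cup\bigcup_{j=1}^{m_2}B_j$ is connected; (4) for every $x\in\mathbf{T}$ there are $I_x\subseteq[m_1]$, $J_x\subseteq[m_2]$ and $k_x\in[m_1]$ such that $$F_{\mathbf{T}}(x)\,\Delta\Big(\bigcup_{i\in I_x}A_i\cup\bigcup_{j\in J_x}B_j\Big)\subseteq A_{k_x}\cup S,$$ where $\Delta$ denotes symmetric difference.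
   Context: A real tree is a complete separable metric space $(\mathbf{T},d)$ in which any two points $x,y$ are joined by a unique non-self-intersecting path $[x,y]$, isometric to a closed real interval; it is rooted at $r$ and carries a Borel probability measure $\mu$. $F_{\mathbf{T}}(x)=\{y\in\mathbf{T}:x\in[r,y]\}$. A leaf is a point $x\ne r$ such that $\mathbf{T}\setminus\{x\}$ is connected; a branchpoint is a point whose removal leaves at least 3 components. $(\mathbf{T},d,r,\mu)$ is an IP-tree if every leaf lies in the closed support of $\mu$ and $d(r,x)+\mu(F_{\mathbf{T}}(x))=1$ for every $x$ that is a branchpoint or lies in the closed support of $\mu$. $[m]=\{1,\dots,m\}$. *)

theory Defs
  imports "HOL-Analysis.Analysis" "HOL-Probability.Probability"
begin

text \<open>The real tree is the whole type 'a (a complete separable metric space,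
  i.e. class polish_space).\<close>

definition arc_between :: "'a::topological_space \<Rightarrow> 'a \<Rightarrow> 'a set \<Rightarrow> bool" where
  "arc_between x y A \<longleftrightarrow>
     (\<exists>g. arc g \<and> pathstart g = x \<and> pathfinish g = y \<and> path_image g = A)"

definition real_tree :: "'a::polish_space itself \<Rightarrow> bool" where
  "real_tree _ \<longleftrightarrow>
     (\<forall>x y::'a. x \<noteq> y \<longrightarrow>
        (\<exists>!A. arc_between x y A) \<and>
        (\<exists>A \<gamma>. arc_between x y A \<and> \<gamma> ` {0..dist x y} = A \<and> \<gamma> 0 = x \<and> \<gamma> (dist x y) = y \<and>
               (\<forall>s\<in>{0..dist x y}. \<forall>t\<in>{0..dist x y}. dist (\<gamma> s) (\<gamma> t) = \<bar>s - t\<bar>)))"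

definition tseg :: "'a::topological_space \<Rightarrow> 'a \<Rightarrow> 'a set" where
  "tseg x y = (if x = y then {x} else (THE A. arc_between x y A))"

text \<open>F_T(x) = {y : x \<in> [r,y]}.\<close>
definition subtree :: "'a::topological_space \<Rightarrow> 'a \<Rightarrow> 'a set" where
  "subtree r x = {y. x \<in> tseg r y}"

definition is_leaf :: "'a::topological_space \<Rightarrow> 'a \<Rightarrow> bool" where
  "is_leaf r x \<longleftrightarrow> x \<noteq> r \<and> connected (UNIV - {x})"

definition is_branchpoint :: "'a::topological_space \<Rightarrow> bool" where
  "is_branchpoint x \<longleftrightarrow> infinite (components (UNIV - {x})) \<or> card (components (UNIV - {x})) \<ge> 3"

definition msupp :: "'a::metric_space measure \<Rightarrow> 'a set" where
  "msupp \<mu> = {x. \<forall>e>0. emeasure \<mu> (ball x e) > 0}"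

definition IP_tree :: "'a::polish_space \<Rightarrow> 'a measure \<Rightarrow> bool" where
  "IP_tree r \<mu> \<longleftrightarrow>
     real_tree TYPE('a) \<and>
     sets \<mu> = sets borel \<and> prob_space \<mu> \<and>
     (\<forall>x. is_leaf r x \<longrightarrow> x \<in> msupp \<mu>) \<and>
     (\<forall>x. is_branchpoint x \<or> x \<in> msupp \<mu> \<longrightarrow> dist r x + measure \<mu> (subtree r x) = 1)"

end

theory Submission
  imports Defs
begin

(*
  Most of the mass of mu sits on a compact set K, and away from a finite set X of atoms every
  set of small radius rho has small measure. Along the segments from the root to a finite net
  of K, a finite skeleton P containing r is chosen so that K lies within distance rho above P.
  Every point y lies in the region of the last point a of P on [r, y]; cutting these regions
  down to the balls of radius rho around their centres gives pieces of small diameter and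
  measure. The A_i are the pieces minus X, the B_j the atoms of X lying in some piece, and S
  the rest. Their union is the set of points within rho above P: it contains K and is a union
  of segments issuing from r, hence connected. Finally, if x lies in the region of k, the
  pieces of the skeleton points above x exhaust the subtree above x except inside the piece
  of k and outside the union of all pieces.
*)

section \<open>Isometric parametrisations\<close>

definition isometric_on :: "(real \<Rightarrow> 'a::metric_space) \<Rightarrow> real set \<Rightarrow> bool" where
  "isometric_on g S \<longleftrightarrow> (\<forall>s\<in>S. \<forall>t\<in>S. dist (g s) (g t) = \<bar>s - t\<bar>)"

lemma isometric_on_subset: "isometric_on g S \<Longrightarrow> T \<subseteq> S \<Longrightarrow> isometric_on g T"
  unfolding isometric_on_def by blast

lemma isometric_onD: "isometric_on g S \<Longrightarrow> s \<in> S \<Longrightarrow> t \<in> S \<Longrightarrow> dist (g s) (g t) = \<bar>s - t\<bar>"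
  unfolding isometric_on_def by blast

lemma isometric_on_imp_continuous_on: "isometric_on g S \<Longrightarrow> continuous_on S g"
  unfolding continuous_on_iff isometric_on_def by (metis dist_real_def)

lemma arc_between_isometric_image:
  assumes "isometric_on g {u..v}" "u < v"
  shows "arc_between (g u) (g v) (g ` {u..v})"
proof -
  define q where "q = g \<circ> (\<lambda>t. (v - u) * t + u)"
  have im: "(\<lambda>t. (v - u) * t + u) ` {0..1} = {u..v}"
    using assms(2) by (simp add: image_affinity_atLeastAtMost)
  have "continuous_on {0..1} (\<lambda>t. (v - u) * t + u)"
    by (intro continuous_intros)
  then have "continuous_on {0..1} q"
    unfolding q_def using continuous_on_compose im isometric_on_imp_continuous_on[OF assms(1)]
    by metis
  moreover have "inj_on q {0..1}"
  proof
    fix s t :: real assume st: "s \<in> {0..1}" "t \<in> {0..1}" and "q s = q t"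
    then have "dist (g ((v - u) * s + u)) (g ((v - u) * t + u)) = 0"
      by (simp add: q_def)
    moreover have "(v - u) * s + u \<in> {u..v}" "(v - u) * t + u \<in> {u..v}"
      using st im by blast+
    ultimately have "\<bar>((v - u) * s + u) - ((v - u) * t + u)\<bar> = 0"
      using isometric_onD[OF assms(1)] by metis
    then have "(v - u) * (s - t) = 0" by (simp add: algebra_simps)
    then show "s = t" using assms(2) by simp
  qed
  ultimately have "arc q" by (simp add: arc_def path_def)
  moreover have "path_image q = g ` {u..v}"
    unfolding path_image_def q_def image_comp[symmetric] im ..
  ultimately show ?thesis
    unfolding arc_between_def by (intro exI[of _ q]) (auto simp: q_def pathstart_def pathfinish_def)
qed

section \<open>Finite Borel measures on Polish spaces\<close>

lemma exists_compact_measure_compl_le: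
  fixes \<mu> :: "'a::polish_space measure"
  assumes sets_\<mu>: "sets \<mu> = sets borel" and "finite_measure \<mu>" and "\<epsilon> > 0"
  obtains K where "compact K" "measure \<mu> (- K) \<le> \<epsilon>"
proof (cases "measure \<mu> UNIV \<le> \<epsilon>")
  case True
  then show ?thesis using that[of "{}"] by simp
next
  case False
  interpret finite_measure \<mu> by fact
  have space_\<mu>: "space \<mu> = UNIV" by (metis sets_\<mu> sets_eq_imp_space_eq space_borel)
  have "emeasure \<mu> UNIV = (SUP K \<in> {K. K \<subseteq> UNIV \<and> compact K}. emeasure \<mu> K)"
    using inner_regular[OF sets_\<mu>, of UNIV] space_\<mu> by simp
  moreover have "ennreal (measure \<mu> UNIV - \<epsilon>) < emeasure \<mu> UNIV"
    using False \<open>\<epsilon> > 0\<close> space_\<mu> by (simp add: emeasure_eq_measure ennreal_less_iff)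
  ultimately obtain K where K: "compact K" "ennreal (measure \<mu> UNIV - \<epsilon>) < emeasure \<mu> K"
    by (metis (no_types, lifting) less_SUP_iff mem_Collect_eq)
  have "K \<in> sets \<mu>" using K(1) sets_\<mu> by (simp add: borel_compact)
  then have "measure \<mu> (- K) = measure \<mu> UNIV - measure \<mu> K"
    using finite_measure_compl space_\<mu> by (simp add: Compl_eq_Diff_UNIV)
  moreover have "measure \<mu> UNIV - \<epsilon> < measure \<mu> K"
    using K(2) False \<open>\<epsilon> > 0\<close> by (simp add: emeasure_eq_measure ennreal_less_iff)
  ultimately show ?thesis using that K(1) by simp
qed

lemma exists_punctured_ball_measure_le:
  fixes \<mu> :: "'a::metric_space measure"
  assumes sets_\<mu>: "sets \<mu> = sets borel" and "finite_measure \<mu>" and "\<epsilon> > 0"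
  obtains t where "t > 0" "measure \<mu> (ball x t - {x}) \<le> \<epsilon>"
proof -
  interpret finite_measure \<mu> by fact
  define A where "A n = ball x (1 / Suc n) - {x}" for n :: nat
  have "range A \<subseteq> sets \<mu>" unfolding sets_\<mu> A_def by auto
  moreover have "decseq A"
  proof (rule decseq_SucI)
    fix n
    have "1 / real (Suc (Suc n)) \<le> 1 / real (Suc n)" by (rule frac_le) auto
    then show "A (Suc n) \<subseteq> A n" unfolding A_def by auto
  qed
  moreover have "y \<notin> (\<Inter>n. A n)" for y
  proof (cases "y = x")
    case False
    then have "dist x y > 0" by simp
    then obtain n :: nat where "1 / Suc n < dist x y" by (rule nat_approx_posE)
    then have "y \<notin> A n" by (simp add: A_def)
    then show ?thesis by blast
  qed (simp add: A_def)
  then have "(\<Inter>n. A n) = {}" by blast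
  ultimately have "(\<lambda>n. measure \<mu> (A n)) \<longlonglongrightarrow> 0"
    using finite_Lim_measure_decseq[of A] by simp
  then have "\<forall>\<^sub>F n in sequentially. measure \<mu> (A n) < \<epsilon>"
    using \<open>\<epsilon> > 0\<close> by (rule order_tendstoD)
  then obtain n where "measure \<mu> (A n) < \<epsilon>"
    using eventually_sequentially by auto
  then show ?thesis using that[of "1 / Suc n"] by (simp add: A_def)
qed

lemma exists_uniform_cball_measure_le:
  fixes \<mu> :: "'a::metric_space measure"
  assumes sets_\<mu>: "sets \<mu> = sets borel" and "finite_measure \<mu>" and "\<epsilon> > 0" and "compact K"
  obtains \<rho> X where "\<rho> > 0" "finite X" "\<And>y. y \<in> K \<Longrightarrow> measure \<mu> (cball y \<rho> - X) \<le> \<epsilon>"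
proof -
  interpret finite_measure \<mu> by fact
  have "\<forall>x. \<exists>t. t > 0 \<and> measure \<mu> (ball x t - {x}) \<le> \<epsilon>"
  proof
    fix x show "\<exists>t. t > 0 \<and> measure \<mu> (ball x t - {x}) \<le> \<epsilon>"
      by (rule exists_punctured_ball_measure_le[OF assms(1-3), of x]) blast
  qed
  then obtain t where t: "\<And>x. t x > 0" "\<And>x. measure \<mu> (ball x (t x) - {x}) \<le> \<epsilon>"
    by (metis choice)
  obtain X where X: "finite X" "K \<subseteq> (\<Union>x\<in>X. ball x (t x / 2))"
  proof (rule compactE_image[OF assms(4), of K "\<lambda>x. ball x (t x / 2)"])
    show "K \<subseteq> (\<Union>x\<in>K. ball x (t x / 2))" using t(1) by auto
    fix C assume "C \<subseteq> K" "finite C" "K \<subseteq> (\<Union>x\<in>C. ball x (t x / 2))"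
    then show thesis by (intro that)
  qed simp
  define \<rho> where "\<rho> = Min (insert 1 ((\<lambda>x. t x / 2) ` X))"
  have "\<rho> > 0" unfolding \<rho>_def using X(1) t(1) by (subst Min_gr_iff) auto
  have \<rho>_le: "\<rho> \<le> t x / 2" if "x \<in> X" for x
    unfolding \<rho>_def by (rule Min_le) (use X(1) that in auto)
  have "measure \<mu> (cball y \<rho> - X) \<le> \<epsilon>" if "y \<in> K" for y
  proof -
    have "y \<in> (\<Union>x\<in>X. ball x (t x / 2))" using X(2) that by blast
    then obtain x where x: "x \<in> X" "dist x y < t x / 2" by auto
    have "dist x z < t x" if "dist y z \<le> \<rho>" for z
      using x(2) \<rho>_le[OF x(1)] dist_triangle[of x z y] that by linarith
    then have "cball y \<rho> - X \<subseteq> ball x (t x) - {x}" using x(1) by auto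
    moreover have "ball x (t x) - {x} \<in> sets \<mu>"
      unfolding sets_\<mu> by (intro sets.Diff borel_open borel_closed open_ball closed_singleton)
    ultimately have "measure \<mu> (cball y \<rho> - X) \<le> measure \<mu> (ball x (t x) - {x})"
      by (rule finite_measure_mono)
    then show ?thesis using t(2)[of x] by linarith
  qed
  then show ?thesis by (rule that[OF \<open>\<rho> > 0\<close> X(1)])
qed

lemma exists_cball_measure_le_off_finite:
  fixes \<mu> :: "'a::polish_space measure"
  assumes sets_\<mu>: "sets \<mu> = sets borel" and "finite_measure \<mu>" and "\<epsilon> > 0"
  obtains \<rho> X where "\<rho> > 0" "finite X"
    "\<And>a B. B \<in> sets \<mu> \<Longrightarrow> B \<subseteq> cball a \<rho> - X \<Longrightarrow> measure \<mu> B \<le> \<epsilon>"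
proof -
  interpret finite_measure \<mu> by fact
  obtain K where K: "compact K" "measure \<mu> (- K) \<le> \<epsilon>"
    using assms by (rule exists_compact_measure_compl_le)
  obtain \<rho> X where \<rho>: "\<rho> > 0" and X: "finite X"
    and small: "\<And>y. y \<in> K \<Longrightarrow> measure \<mu> (cball y \<rho> - X) \<le> \<epsilon>"
    using assms K(1) by (rule exists_uniform_cball_measure_le) (rule that)
  have "measure \<mu> B \<le> \<epsilon>" if B: "B \<in> sets \<mu>" "B \<subseteq> cball a (\<rho> / 2) - X" for a B
  proof (cases "B \<inter> K = {}")
    case True
    then have "B \<subseteq> - K" by blast
    moreover have "- K \<in> sets \<mu>"
      unfolding sets_\<mu> by (intro borel_open open_Compl compact_imp_closed K(1))
    ultimately have "measure \<mu> B \<le> measure \<mu> (- K)" by (rule finite_measure_mono)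
    then show ?thesis using K(2) by linarith
  next
    case False
    then obtain y where y: "y \<in> B" "y \<in> K" by blast
    have "dist y z \<le> \<rho>" if "z \<in> B" for z
    proof -
      have "dist a y \<le> \<rho> / 2" "dist a z \<le> \<rho> / 2" using B(2) y(1) that by auto
      then show ?thesis using dist_triangle[of y z a] dist_commute[of y a] by linarith
    qed
    then have "B \<subseteq> cball y \<rho> - X" using B(2) by auto
    moreover have "cball y \<rho> - X \<in> sets \<mu>"
      unfolding sets_\<mu> using X by (intro sets.Diff borel_closed closed_cball finite_imp_closed)
    ultimately have "measure \<mu> B \<le> measure \<mu> (cball y \<rho> - X)" by (rule finite_measure_mono)
    then show ?thesis using small[OF y(2)] by linarith
  qed
  moreover have "\<rho> / 2 > 0" using \<rho> by simp
  ultimately show ?thesis using X by (intro that)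
qed

lemma tseg_refl [simp]: "tseg x x = {x}"
  by (simp add: tseg_def)

context
  assumes real_tree: "real_tree TYPE('a::polish_space)"
begin

section \<open>Segments of a real tree\<close>

lemma arc_between_tseg:
  fixes x y :: 'a
  assumes "x \<noteq> y"
  shows "arc_between x y (tseg x y)"
proof -
  have "\<exists>!A. arc_between x y A" using real_tree assms unfolding real_tree_def by blast
  then show ?thesis using assms theI' by (simp add: tseg_def)
qed

lemma tseg_eq_arc:
  fixes x y :: 'a
  assumes "arc_between x y A"
  shows "tseg x y = A"
proof -
  have "x \<noteq> y" using assms arc_distinct_ends unfolding arc_between_def by metis
  then show ?thesis
    using assms arc_between_tseg real_tree unfolding real_tree_def by blast
qed

lemma tseg_isometric_image:
  fixes g :: "real \<Rightarrow> 'a"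
  assumes "isometric_on g {u..v}" "u \<le> v"
  shows "tseg (g u) (g v) = g ` {u..v}"
proof (cases "u = v")
  case False
  with assms have "u < v" by simp
  then show ?thesis using tseg_eq_arc arc_between_isometric_image assms(1) by blast
qed simp

lemma tseg_param:
  fixes x y :: 'a
  obtains g where "g 0 = x" "g (dist x y) = y" "isometric_on g {0..dist x y}"
    "tseg x y = g ` {0..dist x y}"
proof (cases "x = y")
  case True
  then show ?thesis using that[of "\<lambda>_. x"] by (auto simp: isometric_on_def)
next
  case False
  then obtain g where g: "g 0 = x" "g (dist x y) = y" "isometric_on g {0..dist x y}"
    using real_tree unfolding real_tree_def isometric_on_def by blast
  then show ?thesis using that tseg_isometric_image[OF g(3)] by simp
qed

lemma tseg_commute:
  fixes x y :: 'a
  shows "tseg x y = tseg y x"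
proof -
  obtain g where g: "g 0 = x" "g (dist x y) = y" "isometric_on g {0..dist x y}"
    "tseg x y = g ` {0..dist x y}"
    by (rule tseg_param)
  define d where "d = dist x y"
  define h where "h t = g (d - t)" for t
  have "isometric_on h {0..d}"
    using g(3) unfolding isometric_on_def h_def d_def by auto
  moreover have "(\<lambda>t. d - t) ` {0..d} = {0..d}"
    using image_affinity_atLeastAtMost[of "-1" d 0 d] by (simp add: d_def)
  then have "h ` {0..d} = g ` {0..d}"
    unfolding h_def by (metis image_image)
  ultimately show ?thesis
    using tseg_isometric_image[of h 0 d] g by (simp add: h_def d_def)
qed

lemma start_in_tseg: "x \<in> tseg x (y::'a)"
proof -
  obtain g where "g 0 = x" "tseg x y = g ` {0..dist x y}"
    by (rule tseg_param)
  then show ?thesis by force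
qed

lemma end_in_tseg: "y \<in> tseg x (y::'a)"
  by (metis start_in_tseg tseg_commute)

lemma tseg_dist_add:
  fixes x y w :: 'a
  assumes "w \<in> tseg x y"
  shows "dist x w + dist w y = dist x y"
proof -
  obtain g where g: "g 0 = x" "g (dist x y) = y" "isometric_on g {0..dist x y}"
    "tseg x y = g ` {0..dist x y}"
    by (rule tseg_param)
  then obtain s where s: "s \<in> {0..dist x y}" "w = g s" using assms by auto
  have "dist (g 0) (g s) = \<bar>0 - s\<bar>" "dist (g s) (g (dist x y)) = \<bar>s - dist x y\<bar>"
    using isometric_onD[OF g(3)] s(1) by auto
  then show ?thesis using s g(1,2) by simp
qed

lemma tseg_subset:
  fixes x y w :: 'a
  assumes "w \<in> tseg x y"
  shows "tseg x w \<subseteq> tseg x y" "tseg w y \<subseteq> tseg x y"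
proof -
  obtain g where g: "g 0 = x" "g (dist x y) = y" "isometric_on g {0..dist x y}"
    "tseg x y = g ` {0..dist x y}"
    by (rule tseg_param)
  then obtain s where s: "0 \<le> s" "s \<le> dist x y" "w = g s" using assms by auto
  have "tseg (g 0) (g s) = g ` {0..s}" "tseg (g s) (g (dist x y)) = g ` {s..dist x y}"
    using s by (auto intro!: tseg_isometric_image isometric_on_subset[OF g(3)])
  then show "tseg x w \<subseteq> tseg x y" "tseg w y \<subseteq> tseg x y" using g s by auto
qed

lemma tseg_ordered:
  fixes x y a b :: 'a
  assumes "a \<in> tseg x y" "b \<in> tseg x y"
  shows "a \<in> tseg x b \<or> b \<in> tseg x a"
proof -
  obtain g where g: "g 0 = x" "g (dist x y) = y" "isometric_on g {0..dist x y}"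
    "tseg x y = g ` {0..dist x y}"
    by (rule tseg_param)
  then obtain s t where st: "0 \<le> s" "s \<le> dist x y" "a = g s" "0 \<le> t" "t \<le> dist x y" "b = g t"
    using assms by auto
  have "tseg (g 0) (g s) = g ` {0..s}" "tseg (g 0) (g t) = g ` {0..t}"
    using st by (auto intro!: tseg_isometric_image isometric_on_subset[OF g(3)])
  then show ?thesis using st g(1) by (cases "s \<le> t") auto
qed

lemma tseg_point_at_dist:
  fixes x y :: 'a
  assumes "0 \<le> t" "t \<le> dist x y"
  obtains p where "p \<in> tseg x y" "dist x p = t"
proof -
  obtain g where g: "g 0 = x" "g (dist x y) = y" "isometric_on g {0..dist x y}"
    "tseg x y = g ` {0..dist x y}"
    by (rule tseg_param)
  then have "dist x (g t) = t" using isometric_onD[OF g(3), of 0 t] assms by simp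
  then show ?thesis using that[of "g t"] g(4) assms by auto
qed

lemma compact_tseg: "compact (tseg x (y::'a))"
  and connected_tseg: "connected (tseg x y)"
proof -
  obtain g where "isometric_on g {0..dist x y}" "tseg x y = g ` {0..dist x y}"
    by (rule tseg_param)
  then show "compact (tseg x y)" "connected (tseg x y)"
    by (auto intro: compact_continuous_image connected_continuous_image
        isometric_on_imp_continuous_on)
qed

lemma tseg_concat:
  fixes x w z :: 'a
  assumes "tseg x w \<inter> tseg w z \<subseteq> {w}"
  shows "tseg x z = tseg x w \<union> tseg w z"
proof -
  consider "w = x" | "w = z" | "w \<noteq> x" "w \<noteq> z" by blast
  then show ?thesis
  proof cases
    case 1
    then show ?thesis using start_in_tseg by auto
  next
    case 2
    then show ?thesis using end_in_tseg by auto
  next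
    case 3
    obtain g1 where g1: "arc g1" "pathstart g1 = x" "pathfinish g1 = w" "path_image g1 = tseg x w"
      using arc_between_tseg[of x w] 3 unfolding arc_between_def by metis
    obtain g2 where g2: "arc g2" "pathstart g2 = w" "pathfinish g2 = z" "path_image g2 = tseg w z"
      using arc_between_tseg[of w z] 3 unfolding arc_between_def by metis
    have "arc (g1 +++ g2)"
      using arc_join[OF g1(1) g2(1)] g1 g2 assms by simp
    then have "arc_between x z (tseg x w \<union> tseg w z)"
      unfolding arc_between_def using g1 g2 path_image_join[of g1 g2]
      by (intro exI[of _ "g1 +++ g2"]) simp
    then show ?thesis using tseg_eq_arc by blast
  qed
qed

lemma tseg_exit_point:
  fixes x y z :: 'a
  obtains w where "w \<in> tseg y x" "w \<in> tseg y z" "tseg w z \<inter> tseg y x \<subseteq> {w}"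
proof -
  obtain b where b: "b 0 = y" "b (dist y z) = z" "isometric_on b {0..dist y z}"
    "tseg y z = b ` {0..dist y z}"
    by (rule tseg_param)
  define T where "T = {0..dist y z} \<inter> b -` tseg y x"
  have "closed T"
    unfolding T_def
    by (intro continuous_closed_preimage isometric_on_imp_continuous_on[OF b(3)]
        compact_imp_closed compact_tseg) auto
  moreover have "T = T \<inter> {0..dist y z}" by (auto simp: T_def)
  ultimately have "compact T" by (metis closed_Int_compact compact_Icc)
  moreover have "0 \<in> T" using b(1) start_in_tseg by (simp add: T_def)
  ultimately obtain s where s: "s \<in> T" "\<And>t. t \<in> T \<Longrightarrow> t \<le> s"
    using compact_attains_sup[of T] by blast
  have "tseg (b s) (b (dist y z)) = b ` {s..dist y z}"
    using s(1) by (intro tseg_isometric_image isometric_on_subset[OF b(3)]) (auto simp: T_def)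
  have "tseg (b s) z \<inter> tseg y x \<subseteq> {b s}"
  proof
    fix v assume v: "v \<in> tseg (b s) z \<inter> tseg y x"
    then obtain t where t: "s \<le> t" "t \<le> dist y z" "v = b t"
      using \<open>tseg (b s) (b (dist y z)) = _\<close> b(2) by auto
    then have "t \<in> T" using v s(1) by (auto simp: T_def)
    then show "v \<in> {b s}" using s(2) t by force
  qed
  moreover have "b s \<in> tseg y x" "b s \<in> tseg y z" using s(1) b(4) by (auto simp: T_def)
  ultimately show ?thesis using that by blast
qed

lemma tseg_subset_Un: "tseg x z \<subseteq> tseg x y \<union> tseg y (z::'a)"
proof -
  obtain w where w: "w \<in> tseg y x" "w \<in> tseg y z" "tseg w z \<inter> tseg y x \<subseteq> {w}"
    by (rule tseg_exit_point)
  have "tseg x w \<subseteq> tseg x y"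
    using w(1) tseg_subset(1) tseg_commute by metis
  moreover have "tseg w z \<subseteq> tseg y z" using w(2) by (rule tseg_subset(2))
  moreover have "tseg x w \<inter> tseg w z \<subseteq> {w}"
    using calculation(1) w(3) tseg_commute[of x y] by blast
  ultimately show ?thesis using tseg_concat by blast
qed

lemma tseg_trans: "a \<in> tseg r x \<Longrightarrow> x \<in> tseg r y \<Longrightarrow> a \<in> tseg r (y::'a)"
  using tseg_subset(1) by blast

lemma tseg_dist_inj:
  fixes x y a b :: 'a
  assumes "a \<in> tseg x y" "b \<in> tseg x y" "dist x a = dist x b"
  shows "a = b"
  using tseg_ordered[OF assms(1,2)] tseg_dist_add[of a x b] tseg_dist_add[of b x a] assms(3)
  by auto

lemma tseg_antisym:
  assumes "a \<in> tseg r b" "b \<in> tseg r (a::'a)"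
  shows "a = b"
proof -
  have "dist a b = 0"
    using tseg_dist_add[OF assms(1)] tseg_dist_add[OF assms(2)] dist_commute[of a b] by linarith
  then show ?thesis by simp
qed

lemma dist_along_tseg:
  fixes r p q y :: 'a
  assumes "p \<in> tseg r q" "q \<in> tseg r y"
  shows "dist p y = dist p q + dist q y"
  using tseg_dist_add[OF assms(1)] tseg_dist_add[OF assms(2)]
    tseg_dist_add[OF tseg_trans[OF assms]] by linarith

lemma subtree_mono: "a \<in> subtree r x \<Longrightarrow> subtree r a \<subseteq> subtree r (x::'a)"
  unfolding subtree_def using tseg_trans by blast

lemma closed_subtree: "closed (subtree r (a::'a))"
proof -
  have "ball y (dist a y) \<subseteq> - subtree r a" if "y \<notin> subtree r a" for y
  proof
    fix z assume z: "z \<in> ball y (dist a y)"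
    show "z \<in> - subtree r a"
    proof
      assume "z \<in> subtree r a"
      then have "a \<in> tseg y z"
        using that tseg_subset_Un[of r z y] tseg_commute[of y r] unfolding subtree_def by blast
      then have "dist y a \<le> dist y z" using tseg_dist_add[of a y z] zero_le_dist[of a z] by linarith
      then show False using z by (simp add: dist_commute)
    qed
  qed
  moreover have "a \<noteq> y" if "y \<notin> subtree r a" for y
    using that end_in_tseg unfolding subtree_def by blast
  ultimately have "open (- subtree r a)"
    unfolding open_contains_ball by (auto intro!: exI[of _ "dist a _"])
  then show ?thesis by (simp add: closed_def)
qed

lemma tseg_point_at_dist_from_end:
  fixes x y c :: 'a
  assumes "dist c y < \<delta>" "\<delta> \<le> dist x y"
  obtains q where "q \<in> tseg x c" "q \<in> tseg x y" "dist q y = \<delta>"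
proof -
  have "0 \<le> dist x y - \<delta>" "dist x y - \<delta> \<le> dist x y"
    using assms zero_le_dist[of c y] by linarith+
  then obtain q where q: "q \<in> tseg x y" "dist x q = dist x y - \<delta>"
    by (rule tseg_point_at_dist)
  then have qy: "dist q y = \<delta>" using tseg_dist_add[of q x y] by simp
  have "q \<notin> tseg y c"
  proof
    assume "q \<in> tseg y c"
    then have "dist y q \<le> dist y c" using tseg_dist_add[of q y c] zero_le_dist[of q c] by linarith
    then show False using qy assms(1) by (simp add: dist_commute)
  qed
  then have "q \<in> tseg x c"
    using q(1) tseg_subset_Un[of x y c] tseg_commute[of c y] by blast
  then show ?thesis using that q(1) qy by blast
qed

section \<open>Regions above a finite skeleton\<close>

text \<open>The points y for which a is the last point of P on the segment from r to y.\<close>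
definition region :: "'a \<Rightarrow> 'a set \<Rightarrow> 'a \<Rightarrow> 'a set" where
  "region r P a = subtree r a - (\<Union>c\<in>{c\<in>P. c \<noteq> a \<and> a \<in> tseg r c}. subtree r c)"

lemma mem_region_imp_tseg: "y \<in> region r P a \<Longrightarrow> a \<in> tseg r y"
  by (simp add: region_def subtree_def)

lemma region_subset_subtree: "region r P a \<subseteq> subtree r a"
  by (auto simp: region_def)

lemma region_last:
  assumes "y \<in> region r P a" "p \<in> P" "p \<in> tseg r y"
  shows "p \<in> tseg r a"
  using tseg_ordered[OF assms(3) mem_region_imp_tseg[OF assms(1)]]
proof
  assume "a \<in> tseg r p"
  then have "p = a" using assms by (auto simp: region_def subtree_def)
  then show ?thesis by (simp add: end_in_tseg)
qed

lemma region_disjoint: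
  assumes "a \<in> P" "b \<in> P" "a \<noteq> b"
  shows "region r P a \<inter> region r P b = {}"
proof (rule ccontr)
  assume "region r P a \<inter> region r P b \<noteq> {}"
  then obtain y where y: "y \<in> region r P a" "y \<in> region r P b" by blast
  have "a \<in> tseg r b" using region_last[OF y(2) assms(1) mem_region_imp_tseg[OF y(1)]] .
  moreover have "b \<in> tseg r a" using region_last[OF y(1) assms(2) mem_region_imp_tseg[OF y(2)]] .
  ultimately have "a = b" by (rule tseg_antisym)
  with assms(3) show False ..
qed

lemma exists_region:
  assumes "finite P" "r \<in> P"
  obtains a where "a \<in> P" "y \<in> region r P a"
proof -
  let ?Q = "P \<inter> tseg r y"
  have fin: "finite (dist r ` ?Q)" using assms(1) by simp
  have "dist r ` ?Q \<noteq> {}" using assms(2) start_in_tseg by blast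
  with fin have "Max (dist r ` ?Q) \<in> dist r ` ?Q" by (rule Max_in)
  then obtain a where a: "Max (dist r ` ?Q) = dist r a" "a \<in> ?Q" by (rule imageE)
  have "y \<in> region r P a"
  proof -
    have "False" if c: "c \<in> P" "c \<noteq> a" "a \<in> tseg r c" "c \<in> tseg r y" for c
    proof -
      have "dist r c \<in> dist r ` ?Q" using c(1,4) by blast
      with fin have "dist r c \<le> dist r a" unfolding a(1)[symmetric] by (rule Max_ge)
      moreover have "dist r c = dist r a + dist a c" using tseg_dist_add[OF c(3)] by simp
      ultimately show False using c(2) by simp
    qed
    then show ?thesis using a(2) by (auto simp: region_def subtree_def)
  qed
  with a(2) show ?thesis by (intro that) simp_all
qed

lemma region_between:
  assumes "y \<in> region r P a" "x \<in> tseg r y" "a \<in> tseg r x"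
  shows "x \<in> region r P a"
  using assms tseg_trans unfolding region_def subtree_def by blast

lemma borel_region: "finite P \<Longrightarrow> region r P a \<in> sets borel"
  unfolding region_def by (intro sets.Diff sets.finite_UN borel_closed closed_subtree) auto

lemma subtree_diff_regions:
  assumes "k \<in> P" "x \<in> region r P k" "\<And>a. a \<in> P \<Longrightarrow> Q a \<subseteq> region r P a"
  shows "subtree r x - (\<Union>a\<in>{a\<in>P. a \<in> subtree r x \<and> a \<noteq> k}. Q a) \<subseteq> Q k \<union> - (\<Union>a\<in>P. Q a)"
proof
  fix y assume y: "y \<in> subtree r x - (\<Union>a\<in>{a\<in>P. a \<in> subtree r x \<and> a \<noteq> k}. Q a)"
  then have xy: "x \<in> tseg r y" by (simp add: subtree_def)
  have "a = k" if a: "a \<in> P" "y \<in> Q a" for a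
  proof -
    have ya: "y \<in> region r P a" using assms(3) a by blast
    from tseg_ordered[OF mem_region_imp_tseg[OF ya] xy] show "a = k"
    proof
      assume "a \<in> tseg r x"
      with ya xy have "x \<in> region r P a" by (rule region_between)
      then show "a = k" using region_disjoint[OF a(1) assms(1)] assms(2) by blast
    next
      assume "x \<in> tseg r a"
      then show "a = k" using y a by (auto simp: subtree_def)
    qed
  qed
  then show "y \<in> Q k \<union> - (\<Union>a\<in>P. Q a)" by blast
qed

definition nbhd_above :: "'a \<Rightarrow> 'a set \<Rightarrow> real \<Rightarrow> 'a set" where
  "nbhd_above r P \<rho> = {y. \<exists>p\<in>P. p \<in> tseg r y \<and> dist p y \<le> \<rho>}"

lemma nbhd_aboveI: "p \<in> P \<Longrightarrow> p \<in> tseg r y \<Longrightarrow> dist p y \<le> \<rho> \<Longrightarrow> y \<in> nbhd_above r P \<rho>"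
  unfolding nbhd_above_def by blast

lemma nbhd_aboveE:
  assumes "y \<in> nbhd_above r P \<rho>"
  obtains p where "p \<in> P" "p \<in> tseg r y" "dist p y \<le> \<rho>"
  using assms unfolding nbhd_above_def by blast

definition piece :: "'a \<Rightarrow> 'a set \<Rightarrow> real \<Rightarrow> 'a \<Rightarrow> 'a set" where
  "piece r P \<rho> a = region r P a \<inter> cball a \<rho>"

lemma nbhd_above_eq_pieces:
  assumes "finite P" "r \<in> P"
  shows "nbhd_above r P \<rho> = (\<Union>a\<in>P. piece r P \<rho> a)"
proof
  show "nbhd_above r P \<rho> \<subseteq> (\<Union>a\<in>P. piece r P \<rho> a)"
  proof
    fix y assume "y \<in> nbhd_above r P \<rho>"
    then obtain p where p: "p \<in> P" "p \<in> tseg r y" "dist p y \<le> \<rho>" by (rule nbhd_aboveE)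
    obtain a where a: "a \<in> P" "y \<in> region r P a" using assms by (rule exists_region)
    have "dist p y = dist p a + dist a y"
      using region_last[OF a(2) p(1,2)] mem_region_imp_tseg[OF a(2)] by (rule dist_along_tseg)
    then have "dist a y \<le> \<rho>" using p(3) zero_le_dist[of p a] by linarith
    then show "y \<in> (\<Union>a\<in>P. piece r P \<rho> a)" using a by (auto simp: piece_def)
  qed
  show "(\<Union>a\<in>P. piece r P \<rho> a) \<subseteq> nbhd_above r P \<rho>"
    using mem_region_imp_tseg by (auto simp: piece_def intro: nbhd_aboveI)
qed

lemma borel_piece: "finite P \<Longrightarrow> piece r P \<rho> a \<in> sets borel"
  unfolding piece_def by (intro sets.Int borel_region borel_closed closed_cball)

lemma subtree_symdiff_pieces:
  fixes \<rho> :: real and X :: "'a set"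
  assumes "finite P" "r \<in> P"
  defines "A \<equiv> \<lambda>a. piece r P \<rho> a - X" and "U \<equiv> nbhd_above r P \<rho>"
  shows "\<exists>I\<subseteq>P. \<exists>J\<subseteq>X \<inter> U. \<exists>k\<in>P.
    (subtree r x - (\<Union>(A ` I) \<union> J)) \<union> ((\<Union>(A ` I) \<union> J) - subtree r x) \<subseteq> A k \<union> - U"
proof -
  obtain k where k: "k \<in> P" "x \<in> region r P k" using assms(1,2) by (rule exists_region)
  define I where "I = {a\<in>P. a \<in> subtree r x \<and> a \<noteq> k}"
  define J where "J = X \<inter> U \<inter> subtree r x"
  have "subtree r x - (\<Union>a\<in>I. piece r P \<rho> a) \<subseteq> piece r P \<rho> k \<union> - U"
    using subtree_diff_regions[OF k, of "piece r P \<rho>"] nbhd_above_eq_pieces[OF assms(1,2)]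
    by (simp add: piece_def I_def U_def)
  moreover have "piece r P \<rho> a \<subseteq> subtree r x" if "a \<in> I" for a
    using that region_subset_subtree subtree_mono unfolding I_def piece_def by blast
  ultimately have "(subtree r x - (\<Union>(A ` I) \<union> J)) \<union> ((\<Union>(A ` I) \<union> J) - subtree r x)
      \<subseteq> A k \<union> - U"
    unfolding A_def J_def by blast
  moreover have "I \<subseteq> P" "J \<subseteq> X \<inter> U" by (auto simp: I_def J_def)
  ultimately show ?thesis using k(1) by blast
qed

lemma tseg_subset_nbhd_above:
  assumes "\<And>a. a \<in> P \<Longrightarrow> tseg r a \<subseteq> nbhd_above r P \<rho>" "y \<in> nbhd_above r P \<rho>"
  shows "tseg r y \<subseteq> nbhd_above r P \<rho>"
proof
  fix z assume z: "z \<in> tseg r y"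
  obtain p where p: "p \<in> P" "p \<in> tseg r y" "dist p y \<le> \<rho>"
    using assms(2) by (rule nbhd_aboveE)
  from tseg_ordered[OF p(2) z] show "z \<in> nbhd_above r P \<rho>"
  proof
    assume pz: "p \<in> tseg r z"
    have "dist p y = dist p z + dist z y" using pz z by (rule dist_along_tseg)
    then have "dist p z \<le> \<rho>" using p(3) zero_le_dist[of z y] by linarith
    with p(1) pz show ?thesis by (rule nbhd_aboveI)
  next
    assume "z \<in> tseg r p"
    then show ?thesis using assms(1) p(1) by blast
  qed
qed

lemma connected_nbhd_above:
  assumes "\<And>a. a \<in> P \<Longrightarrow> tseg r a \<subseteq> nbhd_above r P \<rho>"
  shows "connected (nbhd_above r P \<rho>)"
proof -
  have "nbhd_above r P \<rho> = \<Union> (tseg r ` nbhd_above r P \<rho>)"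
    using tseg_subset_nbhd_above[OF assms] end_in_tseg by blast
  moreover have "r \<in> \<Inter> (tseg r ` nbhd_above r P \<rho>)" using start_in_tseg by blast
  then have "connected (\<Union> (tseg r ` nbhd_above r P \<rho>))"
    by (intro connected_Union) (auto simp: connected_tseg)
  ultimately show ?thesis by simp
qed

section \<open>A skeleton for a compact set\<close>

lemma finite_tseg_grid:
  fixes x y :: 'a
  assumes "\<delta> > 0"
  shows "finite {p \<in> tseg x y. \<exists>k::nat. dist x p = real k * \<delta>}" (is "finite ?G")
proof -
  have "inj_on (dist x) ?G" by (rule inj_onI) (auto intro: tseg_dist_inj)
  moreover have "dist x ` ?G \<subseteq> (\<lambda>k. real k * \<delta>) ` {..nat \<lceil>dist x y / \<delta>\<rceil>}"
  proof
    fix t assume "t \<in> dist x ` ?G"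
    then obtain p k where p: "p \<in> tseg x y" "t = real k * \<delta>" "dist x p = real k * \<delta>" by auto
    then have "real k * \<delta> \<le> dist x y" using tseg_dist_add[of p x y] zero_le_dist[of p y] by linarith
    then have "real k \<le> dist x y / \<delta>" using assms by (simp add: field_simps)
    then have "k \<le> nat \<lceil>dist x y / \<delta>\<rceil>" by linarith
    then show "t \<in> (\<lambda>k. real k * \<delta>) ` {..nat \<lceil>dist x y / \<delta>\<rceil>}" using p(2) by auto
  qed
  ultimately show ?thesis
    by (meson finite_imageD finite_subset finite_atMost finite_imageI)
qed

lemma tseg_grid_point_near:
  fixes x z :: 'a
  assumes "\<delta> > 0"
  obtains p k where "p \<in> tseg x z" "dist x p = real k * \<delta>" "dist p z < \<delta>"
proof -
  define k where "k = nat \<lfloor>dist x z / \<delta>\<rfloor>"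
  have "real k = of_int \<lfloor>dist x z / \<delta>\<rfloor>" using assms by (simp add: k_def)
  then have "real k \<le> dist x z / \<delta>" "dist x z / \<delta> < real k + 1"
    using floor_correct[of "dist x z / \<delta>"] by linarith+
  then have k: "real k * \<delta> \<le> dist x z" "dist x z < real k * \<delta> + \<delta>"
    using assms by (simp_all add: field_simps)
  have "0 \<le> real k * \<delta>" using assms by simp
  then obtain p where p: "p \<in> tseg x z" "dist x p = real k * \<delta>"
    using k(1) by (rule tseg_point_at_dist)
  then have "dist p z < \<delta>" using tseg_dist_add[of p x z] k(2) by simp
  then show ?thesis using that p by blast
qed

definition grid :: "'a \<Rightarrow> 'a set \<Rightarrow> real \<Rightarrow> 'a set" where
  "grid r C \<delta> = insert r (\<Union>c\<in>C. {p \<in> tseg r c. \<exists>k::nat. dist r p = real k * \<delta>})"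

lemma finite_grid: "finite C \<Longrightarrow> \<delta> > 0 \<Longrightarrow> finite (grid r C \<delta>)"
  unfolding grid_def by (simp add: finite_tseg_grid)

lemma grid_point_near:
  assumes "\<delta> > 0" "c \<in> C" "z \<in> tseg r c"
  obtains p where "p \<in> grid r C \<delta>" "p \<in> tseg r z" "dist p z < \<delta>"
proof -
  obtain p k where p: "p \<in> tseg r z" "dist r p = real k * \<delta>" "dist p z < \<delta>"
    using assms(1) by (rule tseg_grid_point_near)
  have "p \<in> tseg r c" using p(1) assms(3) by (rule tseg_trans)
  then have "p \<in> grid r C \<delta>" using p(2) assms(2) unfolding grid_def by blast
  then show ?thesis using p(1,3) by (rule that)
qed

lemma tseg_subset_nbhd_above_grid:
  assumes "\<delta> > 0" "\<delta> \<le> \<rho>" "a \<in> grid r C \<delta>"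
  shows "tseg r a \<subseteq> nbhd_above r (grid r C \<delta>) \<rho>"
proof (cases "a = r")
  case True
  have "r \<in> grid r C \<delta>" by (simp add: grid_def)
  then have "r \<in> nbhd_above r (grid r C \<delta>) \<rho>"
    using start_in_tseg assms(1,2) by (intro nbhd_aboveI) auto
  then show ?thesis using True by simp
next
  case False
  then obtain c where c: "c \<in> C" "a \<in> tseg r c" using assms(3) unfolding grid_def by blast
  show ?thesis
  proof
    fix z assume "z \<in> tseg r a"
    then have "z \<in> tseg r c" using c(2) by (rule tseg_trans)
    with assms(1) c(1) obtain p where "p \<in> grid r C \<delta>" "p \<in> tseg r z" "dist p z < \<delta>"
      by (rule grid_point_near)
    then show "z \<in> nbhd_above r (grid r C \<delta>) \<rho>" using assms(2) by (auto intro: nbhd_aboveI)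
  qed
qed

lemma subset_nbhd_above_grid:
  assumes "\<delta> > 0" "K \<subseteq> (\<Union>c\<in>C. ball c \<delta>)"
  shows "K \<subseteq> nbhd_above r (grid r C \<delta>) (2 * \<delta>)"
proof
  fix y assume "y \<in> K"
  then have "y \<in> (\<Union>c\<in>C. ball c \<delta>)" using assms(2) by blast
  then obtain c where c: "c \<in> C" "dist c y < \<delta>" by auto
  show "y \<in> nbhd_above r (grid r C \<delta>) (2 * \<delta>)"
  proof (cases "dist r y < \<delta>")
    case True
    have "r \<in> grid r C \<delta>" by (simp add: grid_def)
    then show ?thesis using start_in_tseg True assms(1) by (intro nbhd_aboveI) auto
  next
    case False
    then have "\<delta> \<le> dist r y" by simp
    with c(2) obtain q where q: "q \<in> tseg r c" "q \<in> tseg r y" "dist q y = \<delta>"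
      by (rule tseg_point_at_dist_from_end)
    obtain p where p: "p \<in> grid r C \<delta>" "p \<in> tseg r q" "dist p q < \<delta>"
      using assms(1) c(1) q(1) by (rule grid_point_near)
    have "dist p y = dist p q + dist q y" using p(2) q(2) by (rule dist_along_tseg)
    then have "dist p y \<le> 2 * \<delta>" using p(3) q(3) by simp
    with p(1) tseg_trans[OF p(2) q(2)] show ?thesis by (rule nbhd_aboveI)
  qed
qed

lemma exists_skeleton:
  fixes \<mu> :: "'a measure"
  assumes "sets \<mu> = sets borel" and "finite_measure \<mu>" and "\<epsilon> > 0" and "\<rho> > 0"
  obtains P where "finite P" "r \<in> P" "\<And>a. a \<in> P \<Longrightarrow> tseg r a \<subseteq> nbhd_above r P \<rho>"
    "measure \<mu> (- nbhd_above r P \<rho>) \<le> \<epsilon>"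
proof -
  interpret finite_measure \<mu> by fact
  obtain K where K: "compact K" "measure \<mu> (- K) \<le> \<epsilon>"
    using assms(1-3) by (rule exists_compact_measure_compl_le)
  have \<delta>: "\<rho> / 2 > 0" "\<rho> / 2 \<le> \<rho>" using assms(4) by simp_all
  obtain C where C: "finite C" "K \<subseteq> (\<Union>c\<in>C. ball c (\<rho> / 2))"
    using seq_compact_imp_totally_bounded[OF compact_imp_seq_compact[OF K(1)]] \<delta>(1) by blast
  define P where "P = grid r C (\<rho> / 2)"
  have "- nbhd_above r P \<rho> \<subseteq> - K"
    using subset_nbhd_above_grid[OF \<delta>(1) C(2), of r] by (auto simp: P_def)
  moreover have "- K \<in> sets \<mu>"
    unfolding assms(1) by (intro borel_open open_Compl compact_imp_closed K(1))
  ultimately have "measure \<mu> (- nbhd_above r P \<rho>) \<le> \<epsilon>"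
    using K(2) finite_measure_mono by (meson order_trans)
  moreover have "r \<in> P" by (simp add: P_def grid_def)
  ultimately show ?thesis
    using finite_grid[OF C(1) \<delta>(1)] tseg_subset_nbhd_above_grid[OF \<delta>] unfolding P_def
    by (intro that)
qed

section \<open>The decomposition\<close>

lemma exists_tree_decomposition:
  fixes r :: 'a and \<mu> :: "'a measure"
  assumes sets_\<mu>: "sets \<mu> = sets borel" and "finite_measure \<mu>" and "\<epsilon> > 0"
  obtains P Y :: "'a set" and A :: "'a \<Rightarrow> 'a set" and S where
    "finite P" "finite Y" "\<And>a. A a \<in> sets \<mu>" "S \<in> sets \<mu>"
    "(\<Union>a\<in>P. A a) \<union> Y = - S" "disjoint_family_on A P" "(\<Union>a\<in>P. A a) \<inter> Y = {}"
    "measure \<mu> S \<le> \<epsilon>" "\<And>a x y. x \<in> A a \<Longrightarrow> y \<in> A a \<Longrightarrow> dist x y \<le> \<epsilon>"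
    "\<And>a. measure \<mu> (A a) \<le> \<epsilon>" "connected (- S)"
    "\<And>x. \<exists>I\<subseteq>P. \<exists>J\<subseteq>Y. \<exists>k\<in>P.
      (subtree r x - (\<Union>(A ` I) \<union> J)) \<union> ((\<Union>(A ` I) \<union> J) - subtree r x) \<subseteq> A k \<union> S"
proof -
  interpret finite_measure \<mu> by fact
  obtain \<rho> X where \<rho>: "\<rho> > 0" and X: "finite X"
    and small: "\<And>a B. B \<in> sets \<mu> \<Longrightarrow> B \<subseteq> cball a \<rho> - X \<Longrightarrow> measure \<mu> B \<le> \<epsilon>"
    using assms by (rule exists_cball_measure_le_off_finite) (rule that)
  define \<rho>' where "\<rho>' = min \<epsilon> \<rho> / 2"
  have \<rho>': "\<rho>' > 0" "2 * \<rho>' \<le> \<epsilon>" "\<rho>' \<le> \<rho>" using \<rho> \<open>\<epsilon> > 0\<close> by (auto simp: \<rho>'_def)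
  obtain P where P: "finite P" "r \<in> P" "\<And>a. a \<in> P \<Longrightarrow> tseg r a \<subseteq> nbhd_above r P \<rho>'"
    "measure \<mu> (- nbhd_above r P \<rho>') \<le> \<epsilon>"
    using assms \<rho>'(1) by (rule exists_skeleton[where r = r]) (rule that)
  define U where "U = nbhd_above r P \<rho>'"
  define A where "A a = piece r P \<rho>' a - X" for a
  have U_eq: "U = (\<Union>a\<in>P. piece r P \<rho>' a)"
    unfolding U_def using P(1,2) by (rule nbhd_above_eq_pieces)
  have A_sets: "A a \<in> sets \<mu>" for a
    unfolding A_def sets_\<mu> using P(1) X by (intro sets.Diff borel_piece borel_closed finite_imp_closed)
  have "U \<in> sets borel" unfolding U_eq using P(1) by (intro sets.finite_UN borel_piece) auto
  then have S_sets: "- U \<in> sets \<mu>" unfolding sets_\<mu> by (rule borel_comp)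
  have A_cball: "A a \<subseteq> cball a \<rho>' - X" for a by (auto simp: A_def piece_def)
  have "(\<Union>a\<in>P. A a) \<union> (X \<inter> U) = - (- U)" by (auto simp: U_eq A_def)
  moreover have "disjoint_family_on A P"
    unfolding disjoint_family_on_def A_def piece_def using region_disjoint by blast
  moreover have "(\<Union>a\<in>P. A a) \<inter> (X \<inter> U) = {}" by (auto simp: A_def)
  moreover have "measure \<mu> (- U) \<le> \<epsilon>" using P(4) by (simp add: U_def)
  moreover have "dist x y \<le> \<epsilon>" if "x \<in> A a" "y \<in> A a" for a x y
  proof -
    have "dist a x \<le> \<rho>'" "dist a y \<le> \<rho>'" using that A_cball[of a] by auto
    then show ?thesis using dist_triangle[of x y a] dist_commute[of a x] \<rho>'(2) by linarith
  qed
  moreover have "measure \<mu> (A a) \<le> \<epsilon>" for a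
  proof (rule small)
    show "A a \<subseteq> cball a \<rho> - X" using A_cball[of a] \<rho>'(3) by auto
  qed (rule A_sets)
  moreover have "connected (- (- U))" unfolding U_def using P(3) by (simp add: connected_nbhd_above)
  moreover have "\<exists>I\<subseteq>P. \<exists>J\<subseteq>X \<inter> U. \<exists>k\<in>P.
      (subtree r x - (\<Union>(A ` I) \<union> J)) \<union> ((\<Union>(A ` I) \<union> J) - subtree r x) \<subseteq> A k \<union> - U" for x
    using subtree_symdiff_pieces[OF P(1,2), where \<rho> = \<rho>' and X = X and x = x]
    unfolding A_def U_def .
  ultimately show ?thesis using P(1) X A_sets S_sets by (intro that[of P "X \<inter> U" A "- U"]) auto
qed

end

lemma symdiff_reindex:
  assumes h: "bij_betw h M P" and g: "bij_betw g N Y" and "I \<subseteq> P" "J \<subseteq> Y" "k \<in> P"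
    and sub: "(F - (\<Union>(A ` I) \<union> J)) \<union> ((\<Union>(A ` I) \<union> J) - F) \<subseteq> A k \<union> S"
  shows "\<exists>I'\<subseteq>M. \<exists>J'\<subseteq>N. \<exists>k'\<in>M. (F - ((\<Union>i\<in>I'. A (h i)) \<union> (\<Union>j\<in>J'. {g j}))) \<union>
    (((\<Union>i\<in>I'. A (h i)) \<union> (\<Union>j\<in>J'. {g j})) - F) \<subseteq> A (h k') \<union> S"
proof -
  have "I \<subseteq> h ` M" "J \<subseteq> g ` N" "k \<in> h ` M" using h g assms(3-5) by (auto simp: bij_betw_def)
  then obtain I' J' k' where I': "I' \<subseteq> M" "I = h ` I'" and J': "J' \<subseteq> N" "J = g ` J'"
    and k': "k = h k'" "k' \<in> M"
    by (elim subset_imageE imageE)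
  have "(F - ((\<Union>i\<in>I'. A (h i)) \<union> (\<Union>j\<in>J'. {g j}))) \<union>
      (((\<Union>i\<in>I'. A (h i)) \<union> (\<Union>j\<in>J'. {g j})) - F) \<subseteq> A (h k') \<union> S"
    using sub unfolding I'(2) J'(2) k'(1) by (simp add: UNION_singleton_eq_range)
  with I'(1) J'(1) k'(2) show ?thesis by blast
qed

theorem lemma4p4:
  fixes r :: "'a::polish_space" and \<mu> :: "'a measure" and \<epsilon> :: real
  assumes "IP_tree r \<mu>" and "\<epsilon> > 0"
  shows "\<exists>(m1::nat) (m2::nat) (A::nat \<Rightarrow> 'a set) (B::nat \<Rightarrow> 'a set) (S::'a set).
     (\<forall>i\<in>{1..m1}. A i \<in> sets \<mu>) \<and> (\<forall>j\<in>{1..m2}. B j \<in> sets \<mu>) \<and> S \<in> sets \<mu> \<and>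
     \<comment> \<open>(1) partition\<close>
     (\<Union>i\<in>{1..m1}. A i) \<union> (\<Union>j\<in>{1..m2}. B j) \<union> S = UNIV \<and>
     (\<forall>i\<in>{1..m1}. \<forall>i'\<in>{1..m1}. i \<noteq> i' \<longrightarrow> A i \<inter> A i' = {}) \<and>
     (\<forall>j\<in>{1..m2}. \<forall>j'\<in>{1..m2}. j \<noteq> j' \<longrightarrow> B j \<inter> B j' = {}) \<and>
     (\<forall>i\<in>{1..m1}. \<forall>j\<in>{1..m2}. A i \<inter> B j = {}) \<and>
     (\<forall>i\<in>{1..m1}. A i \<inter> S = {}) \<and> (\<forall>j\<in>{1..m2}. B j \<inter> S = {}) \<and>
     \<comment> \<open>(2)\<close>
     measure \<mu> S \<le> \<epsilon> \<and>
     (\<forall>i\<in>{1..m1}. (\<forall>x\<in>A i. \<forall>y\<in>A i. dist x y \<le> \<epsilon>) \<and> measure \<mu> (A i) \<le> \<epsilon>) \<and>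
     (\<forall>j\<in>{1..m2}. card (B j) = 1) \<and>
     \<comment> \<open>(3)\<close>
     connected (closure ((\<Union>i\<in>{1..m1}. A i) \<union> (\<Union>j\<in>{1..m2}. B j))) \<and>
     \<comment> \<open>(4)\<close>
     (\<forall>x. \<exists>I\<subseteq>{1..m1}. \<exists>J\<subseteq>{1..m2}. \<exists>k\<in>{1..m1}.
        (subtree r x - ((\<Union>i\<in>I. A i) \<union> (\<Union>j\<in>J. B j))) \<union>
        (((\<Union>i\<in>I. A i) \<union> (\<Union>j\<in>J. B j)) - subtree r x) \<subseteq> A k \<union> S)"
proof -
  have real_tree: "real_tree TYPE('a)" and sets_\<mu>: "sets \<mu> = sets borel" and "finite_measure \<mu>"
    using assms(1) by (auto simp: IP_tree_def prob_space_def)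
  show ?thesis
  proof (rule exists_tree_decomposition[OF real_tree sets_\<mu> \<open>finite_measure \<mu>\<close> assms(2), where r = r])
    fix P Y A S
    assume P: "finite P" and Y: "finite Y" and A_sets: "\<And>a. A a \<in> sets \<mu>" and "S \<in> sets \<mu>"
      and cover: "(\<Union>a\<in>P. A a) \<union> Y = - S" and disj: "disjoint_family_on A P"
      and AY: "(\<Union>a\<in>P. A a) \<inter> Y = {}" and "measure \<mu> S \<le> \<epsilon>"
      and diam: "\<And>a x y. x \<in> A a \<Longrightarrow> y \<in> A a \<Longrightarrow> dist x y \<le> \<epsilon>"
      and meas: "\<And>a. measure \<mu> (A a) \<le> \<epsilon>" and conn: "connected (- S)"
      and approx: "\<And>x. \<exists>I\<subseteq>P. \<exists>J\<subseteq>Y. \<exists>k\<in>P.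
        (subtree r x - (\<Union>(A ` I) \<union> J)) \<union> ((\<Union>(A ` I) \<union> J) - subtree r x) \<subseteq> A k \<union> S"
    obtain h where h: "bij_betw h {1..card P} P" using ex_bij_betw_nat_finite_1[OF P] ..
    obtain g where g: "bij_betw g {1..card Y} Y" using ex_bij_betw_nat_finite_1[OF Y] ..
    have cover_nat: "(\<Union>i\<in>{1..card P}. A (h i)) \<union> (\<Union>j\<in>{1..card Y}. {g j}) = - S"
      using cover h g
      by (simp add: bij_betw_def UNION_singleton_eq_range image_image[symmetric] del: image_image)
    have approx_nat: "\<exists>I\<subseteq>{1..card P}. \<exists>J\<subseteq>{1..card Y}. \<exists>k\<in>{1..card P}.
        (subtree r x - ((\<Union>i\<in>I. A (h i)) \<union> (\<Union>j\<in>J. {g j}))) \<union>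
        (((\<Union>i\<in>I. A (h i)) \<union> (\<Union>j\<in>J. {g j})) - subtree r x) \<subseteq> A (h k) \<union> S" for x
    proof -
      obtain I J k where "I \<subseteq> P" "J \<subseteq> Y" "k \<in> P"
        "(subtree r x - (\<Union>(A ` I) \<union> J)) \<union> ((\<Union>(A ` I) \<union> J) - subtree r x) \<subseteq> A k \<union> S"
        using approx[of x] by blast
      then show ?thesis by (rule symdiff_reindex[OF h g])
    qed
    have h_P: "h i \<in> P" if "i \<in> {1..card P}" for i using h that by (rule bij_betw_apply)
    have g_Y: "g j \<in> Y" if "j \<in> {1..card Y}" for j using g that by (rule bij_betw_apply)
    have h_inj: "inj_on h {1..card P}" and g_inj: "inj_on g {1..card Y}"
      using h g by (simp_all add: bij_betw_imp_inj_on)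
    show ?thesis
    proof (rule exI[of _ "card P"], rule exI[of _ "card Y"], rule exI[of _ "\<lambda>i. A (h i)"],
        rule exI[of _ "\<lambda>j. {g j}"], rule exI[of _ S], intro conjI allI)
      show "(\<Union>i\<in>{1..card P}. A (h i)) \<union> (\<Union>j\<in>{1..card Y}. {g j}) \<union> S = UNIV"
        "\<forall>i\<in>{1..card P}. A (h i) \<inter> S = {}" "\<forall>j\<in>{1..card Y}. {g j} \<inter> S = {}"
        using cover_nat by blast+
      show "\<forall>i\<in>{1..card P}. \<forall>i'\<in>{1..card P}. i \<noteq> i' \<longrightarrow> A (h i) \<inter> A (h i') = {}"
        using disj h_P h_inj unfolding disjoint_family_on_def inj_on_def by blast
      show "\<forall>j\<in>{1..card Y}. \<forall>j'\<in>{1..card Y}. j \<noteq> j' \<longrightarrow> {g j} \<inter> {g j'} = {}"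
        using g_inj unfolding inj_on_def by blast
      show "\<forall>i\<in>{1..card P}. \<forall>j\<in>{1..card Y}. A (h i) \<inter> {g j} = {}"
        using AY h_P g_Y by blast
      show "connected (closure ((\<Union>i\<in>{1..card P}. A (h i)) \<union> (\<Union>j\<in>{1..card Y}. {g j})))"
        unfolding cover_nat using conn by (rule connected_imp_connected_closure)
    qed (use A_sets \<open>S \<in> sets \<mu>\<close> \<open>measure \<mu> S \<le> \<epsilon>\<close> diam meas approx_nat in
        \<open>simp_all add: sets_\<mu>\<close>)
  qed
qed

end
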